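(* Let $(\tau_\Sigma,\mathbb{B}_\Sigma)_\Sigma$ be a family indexed by the finite sets $\Sigma$ with at least two elements, where $\tau_\Sigma$ is a topology on $\Sigma^{\mathbb{N}}$ and $\mathbb{B}_\Sigma$ is a basis of $\tau_\Sigma$, satisfying: (P1) $\mathbb{B}_\Sigma$ contains every set $N_w$, $w\in\Sigma^*$; (P2) $\mathbb{B}_\Sigma$ is closed under finite unions and finite intersections; (P3) if $\Gamma$ is a finite set with at least two elements and $L\in\mathbb{B}_{\Sigma\times\Gamma}$, then $\pi_0[L]\in\mathbb{B}_\Sigma$; (P4) for each $L\in\mathbb{B}_\Sigma$ there is $C\in\mathbb{B}_{\Sigma\times 2}$ with $C\subseteq\Sigma^{\mathbb{N}}\times\mathbb{P}_\infty$, $C$ closed in $\Sigma^{\mathbb{N}}\times\mathbb{P}_\infty$ (i.e. $C=F\cap(\Sigma^{\mathbb{N}}\times\mathbb{P}_\infty)$ for some $\tau_C$-closed $F\subseteq\Sigma^{\mathbb{N}}\times 2^{\mathbb{N}}$), and $L=\pi_0[C]$. Then every topology $\tau_\Sigma$ is strong Choquet.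
   Context: $N_w=\{\sigma\in\Sigma^{\mathbb{N}}: w\text{ prefix of }\sigma\}$; $\tau_C$ denotes the product-of-discrete (Cantor) topology. $2=\{0,1\}$ and $\mathbb{P}_\infty=\{\alpha\in 2^{\mathbb{N}}: \alpha(i)=1\text{ for infinitely many } i\}$. The space $\Sigma^{\mathbb{N}}\times\Gamma^{\mathbb{N}}$ is identified with $(\Sigma\times\Gamma)^{\mathbb{N}}$ via $(\sigma,\gamma)\mapsto((\sigma(n),\gamma(n)))_n$, and $\pi_0$ is the projection onto the first coordinate. Strong Choquet game on a space $X$: Player 1 plays an open $U_i$ and $x_i\in U_i$ with $U_i\subseteq V_{i-1}$; Player 2 plays an open $V_i$ with $x_i\in V_i\subseteq U_i$; Player 2 wins if $\bigcap_i V_i\neq\emptyset$. $X$ is strong Choquet if it is nonempty and Player 2 has a winning strategy. *)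

theory Defs
  imports "HOL-Analysis.Analysis"
begin

text \<open>A universe of letters, closed under pairing, so that alphabets
  (finite sets with at least two elements) and their products Sigma x Gamma can
  all be treated uniformly as finite sets of one HOL type.\<close>
datatype letter = Atom nat | LPair letter letter

fun lfst :: "letter \<Rightarrow> letter" where
  "lfst (LPair a b) = a" | "lfst (Atom n) = Atom n"

fun lsnd :: "letter \<Rightarrow> letter" where
  "lsnd (LPair a b) = b" | "lsnd (Atom n) = Atom n"

definition alphabet :: "letter set \<Rightarrow> bool" where
  "alphabet S \<longleftrightarrow> finite S \<and> card S \<ge> 2"

definition prodA :: "letter set \<Rightarrow> letter set \<Rightarrow> letter set" where
  "prodA S G = {LPair a b | a b. a \<in> S \<and> b \<in> G}"

definition two :: "letter set" where
  "two = {Atom 0, Atom 1}"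

definition seqs :: "letter set \<Rightarrow> (nat \<Rightarrow> letter) set" where
  "seqs S = {\<sigma>. \<forall>n. \<sigma> n \<in> S}"

definition cyl :: "letter set \<Rightarrow> letter list \<Rightarrow> (nat \<Rightarrow> letter) set" where
  "cyl S w = {\<sigma> \<in> seqs S. \<forall>i < length w. \<sigma> i = w ! i}"

definition proj0 :: "(nat \<Rightarrow> letter) \<Rightarrow> (nat \<Rightarrow> letter)" where
  "proj0 \<rho> = (\<lambda>n. lfst (\<rho> n))"

definition proj1 :: "(nat \<Rightarrow> letter) \<Rightarrow> (nat \<Rightarrow> letter)" where
  "proj1 \<rho> = (\<lambda>n. lsnd (\<rho> n))"

definition Pinf :: "(nat \<Rightarrow> letter) set" where
  "Pinf = {\<alpha> \<in> seqs two. infinite {i. \<alpha> i = Atom 1}}"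

text \<open>Sigma^N x P_infty, as a subset of (Sigma x 2)^N.\<close>
definition seqs_Pinf :: "letter set \<Rightarrow> (nat \<Rightarrow> letter) set" where
  "seqs_Pinf S = {\<rho> \<in> seqs (prodA S two). proj1 \<rho> \<in> Pinf}"

definition cantor_top :: "letter set \<Rightarrow> (nat \<Rightarrow> letter) topology" where
  "cantor_top A = product_topology (\<lambda>_::nat. discrete_topology A) UNIV"

definition is_basis :: "'a topology \<Rightarrow> 'a set set \<Rightarrow> bool" where
  "is_basis T B \<longleftrightarrow> (\<forall>U\<in>B. openin T U) \<and>
     (\<forall>U. openin T U \<longrightarrow> (\<exists>B'. B' \<subseteq> B \<and> \<Union>B' = U))"

text \<open>Strong Choquet game. A strategy for Player 2 maps the history of
  Player 1's moves (U_0,x_0),...,(U_n,x_n) to V_n.\<close>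
definition resp :: "(('a set \<times> 'a) list \<Rightarrow> 'a set) \<Rightarrow> (nat \<Rightarrow> 'a set) \<Rightarrow> (nat \<Rightarrow> 'a) \<Rightarrow> nat \<Rightarrow> 'a set" where
  "resp s u x n = s (map (\<lambda>i. (u i, x i)) [0..<Suc n])"

definition p1_legal :: "'a topology \<Rightarrow> (('a set \<times> 'a) list \<Rightarrow> 'a set) \<Rightarrow> (nat \<Rightarrow> 'a set) \<Rightarrow> (nat \<Rightarrow> 'a) \<Rightarrow> nat \<Rightarrow> bool" where
  "p1_legal T s u x k \<longleftrightarrow> openin T (u k) \<and> x k \<in> u k \<and>
     (\<forall>m. k = Suc m \<longrightarrow> u k \<subseteq> resp s u x m)"

definition strong_choquet :: "'a topology \<Rightarrow> bool" where
  "strong_choquet T \<longleftrightarrow> topspace T \<noteq> {} \<and>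
     (\<exists>s. (\<forall>u x n. (\<forall>k\<le>n. p1_legal T s u x k) \<longrightarrow>
                 openin T (resp s u x n) \<and> x n \<in> resp s u x n \<and> resp s u x n \<subseteq> u n) \<and>
          (\<forall>u x. (\<forall>k. p1_legal T s u x k) \<longrightarrow> (\<Inter>n. resp s u x n) \<noteq> {}))"

end

theory Submission
  imports Defs
begin

text \<open>Player 2 answers a move (U_i, x_i) by fixing a basic set C_i over Sigma x 2 that is
  relatively closed in Sigma^N x P_inf and satisfies x_i \<in> pi_0[C_i] \<subseteq> U_i (P4).
  During the play she keeps, for each i \<le> n, a finite word t(i,n) such that x_n is the
  projection of an element of C_i extending t(i,n), and answers
  V_n = \<Inter>{pi_0[C_i \<inter> N_t(i,n)] | i \<le> n}, a basic set by P1--P3. Every round extends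
  each t(i,n) by a segment containing a 1 in the second coordinate, so the limit tau_i of the
  words t(i,n) lies in Sigma^N x P_inf and in the closure of C_i, hence in C_i. All tau_i
  project to the same point, which therefore lies in every V_n.\<close>

lemma cantor_closed_contains_limit:
  assumes F: "closedin (cantor_top A) F" and \<tau>: "\<tau> \<in> seqs A"
    and approx: "\<And>N. \<exists>\<rho>\<in>F. \<forall>j<N. \<rho> j = \<tau> j"
  shows "\<tau> \<in> F"
proof (rule ccontr)
  assume "\<tau> \<notin> F"
  have topspace: "topspace (cantor_top A) = seqs A"
    by (auto simp: cantor_top_def seqs_def PiE_def extensional_def)
  have "openin (cantor_top A) (topspace (cantor_top A) - F)"
    using F by (simp add: closedin_def)
  moreover have "\<tau> \<in> topspace (cantor_top A) - F"
    using \<tau> \<open>\<tau> \<notin> F\<close> topspace by blast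
  ultimately have "\<exists>U. finite {i \<in> UNIV. U i \<noteq> topspace (discrete_topology A)} \<and>
      (\<forall>i \<in> UNIV. openin (discrete_topology A) (U i)) \<and> \<tau> \<in> Pi\<^sub>E UNIV U \<and>
      Pi\<^sub>E UNIV U \<subseteq> topspace (cantor_top A) - F"
    unfolding cantor_top_def openin_product_topology_alt by blast
  then obtain U where U: "finite {i. U i \<noteq> A}" "\<tau> \<in> Pi\<^sub>E UNIV U"
      "Pi\<^sub>E UNIV U \<subseteq> topspace (cantor_top A) - F"
    by auto
  obtain N where N: "{i. U i \<noteq> A} \<subseteq> {..<N}"
    using finite_nat_bounded[OF U(1)] by blast
  obtain \<rho> where \<rho>: "\<rho> \<in> F" "\<forall>j<N. \<rho> j = \<tau> j"
    using approx by blast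
  have "\<rho> \<in> seqs A"
    using \<rho>(1) F closedin_subset topspace by blast
  have "\<rho> i \<in> U i" for i
  proof (cases "U i = A")
    case True
    then show ?thesis
      using \<open>\<rho> \<in> seqs A\<close> by (simp add: seqs_def)
  next
    case False
    then have "i < N"
      using N by auto
    then show ?thesis
      using \<rho>(2) U(2) by (auto simp: PiE_def Pi_def)
  qed
  then have "\<rho> \<in> Pi\<^sub>E UNIV U"
    by auto
  then show False
    using U(3) \<rho>(1) by blast
qed

lemma cyl_Nil [simp]: "cyl A [] = seqs A"
  by (simp add: cyl_def)

lemma set_subset_if_mem_cyl: "\<rho> \<in> cyl A w \<Longrightarrow> set w \<subseteq> A"
  by (auto simp: cyl_def seqs_def in_set_conv_nth) metis

lemma mem_cyl_map_upt: "\<rho> \<in> seqs A \<Longrightarrow> \<rho> \<in> cyl A (map \<rho> [0..<n])"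
  by (simp add: cyl_def)

lemma map_upt_eq_append_if_mem_cyl:
  assumes "\<rho> \<in> cyl A t" "length t \<le> n"
  shows "map \<rho> [0..<n] = t @ map \<rho> [length t..<n]"
proof -
  have "map \<rho> [0..<length t] = t"
    using assms(1) by (intro nth_equalityI) (auto simp: cyl_def)
  then show ?thesis
    using assms(2) upt_add_eq_append[of 0 "length t" "n - length t"] by auto
qed

lemma proj1_mem_seqs_prodA:
  assumes "\<rho> \<in> seqs (prodA S G)"
  shows "proj1 \<rho> \<in> seqs G"
proof -
  have "lsnd (\<rho> n) \<in> G" for n
  proof -
    obtain a b where "\<rho> n = LPair a b" "b \<in> G"
      using assms unfolding seqs_def prodA_def by blast
    then show ?thesis
      by simp
  qed
  then show ?thesis
    by (simp add: seqs_def proj1_def)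
qed

lemma alphabet_two: "alphabet two"
  by (simp add: alphabet_def two_def)

lemma alphabet_prodA:
  assumes "alphabet S" "alphabet G"
  shows "alphabet (prodA S G)"
proof -
  have eq: "prodA S G = (\<lambda>(a, b). LPair a b) ` (S \<times> G)"
    by (auto simp: prodA_def)
  have "inj_on (\<lambda>(a, b). LPair a b) (S \<times> G)"
    by (auto simp: inj_on_def)
  then have "card (prodA S G) = card S * card G"
    by (simp add: eq card_image card_cartesian_product)
  moreover have "2 * 2 \<le> card S * card G"
    using assms by (intro mult_le_mono) (auto simp: alphabet_def)
  ultimately show ?thesis
    using assms by (auto simp: alphabet_def eq)
qed

locale choquet_basis =
  fixes T :: "(nat \<Rightarrow> letter) topology"
    and B B2 :: "(nat \<Rightarrow> letter) set set"
    and S :: "letter set"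
  assumes nonempty: "S \<noteq> {}"
    and topspace: "topspace T = seqs S"
    and basis: "is_basis T B"
    and Int_mem: "L1 \<in> B \<Longrightarrow> L2 \<in> B \<Longrightarrow> L1 \<inter> L2 \<in> B"
    and cyl_mem2: "set w \<subseteq> prodA S two \<Longrightarrow> cyl (prodA S two) w \<in> B2"
    and Int_mem2: "L1 \<in> B2 \<Longrightarrow> L2 \<in> B2 \<Longrightarrow> L1 \<inter> L2 \<in> B2"
    and proj0_mem: "L \<in> B2 \<Longrightarrow> proj0 ` L \<in> B"
    and closed_cover: "L \<in> B \<Longrightarrow> \<exists>C \<in> B2. C \<subseteq> seqs_Pinf S \<and>
           (\<exists>F. closedin (cantor_top (prodA S two)) F \<and> C = F \<inter> seqs_Pinf S) \<and> L = proj0 ` C"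
begin

abbreviation S2 :: "letter set" where
  "S2 \<equiv> prodA S two"

definition is_witness :: "(nat \<Rightarrow> letter) set \<Rightarrow> (nat \<Rightarrow> letter) \<Rightarrow> (nat \<Rightarrow> letter) set \<Rightarrow> bool"
  where "is_witness U z C \<longleftrightarrow> C \<in> B2 \<and>
    (\<exists>F. closedin (cantor_top S2) F \<and> C = F \<inter> seqs_Pinf S) \<and> z \<in> proj0 ` C \<and> proj0 ` C \<subseteq> U"

definition witness :: "(nat \<Rightarrow> letter) set \<Rightarrow> (nat \<Rightarrow> letter) \<Rightarrow> (nat \<Rightarrow> letter) set"
  where "witness U z = (SOME C. is_witness U z C)"

lemma is_witness_witness:
  assumes "openin T U" "z \<in> U"
  shows "is_witness U z (witness U z)"
proof -
  obtain \<B> where "\<B> \<subseteq> B" "\<Union>\<B> = U"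
    using basis assms(1) unfolding is_basis_def by blast
  then obtain L where L: "L \<in> B" "z \<in> L" "L \<subseteq> U"
    using assms(2) by blast
  obtain C where "C \<in> B2" "\<exists>F. closedin (cantor_top S2) F \<and> C = F \<inter> seqs_Pinf S" "L = proj0 ` C"
    using closed_cover[OF L(1)] by blast
  then have "is_witness U z C"
    using L by (auto simp: is_witness_def)
  then show ?thesis
    unfolding witness_def by (rule someI)
qed

lemma witness_subset_seqs_Pinf:
  "is_witness U z C \<Longrightarrow> C \<subseteq> seqs_Pinf S"
  by (auto simp: is_witness_def)

definition marked_extension ::
    "(nat \<Rightarrow> letter) set \<Rightarrow> letter list \<Rightarrow> (nat \<Rightarrow> letter) \<Rightarrow> letter list \<Rightarrow> bool"
  where "marked_extension C t z t' \<longleftrightarrow> (\<exists>w. t' = t @ w) \<and>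
    (\<exists>k. length t \<le> k \<and> k < length t' \<and> lsnd (t' ! k) = Atom 1) \<and> z \<in> proj0 ` (C \<inter> cyl S2 t')"

definition next_word :: "(nat \<Rightarrow> letter) set \<Rightarrow> letter list \<Rightarrow> (nat \<Rightarrow> letter) \<Rightarrow> letter list"
  where "next_word C t z = (SOME t'. marked_extension C t z t')"

lemma marked_extension_next_word:
  assumes C: "C \<subseteq> seqs_Pinf S" and z: "z \<in> proj0 ` (C \<inter> cyl S2 t)"
  shows "marked_extension C t z (next_word C t z)"
proof -
  obtain \<rho> where \<rho>: "\<rho> \<in> C" "\<rho> \<in> cyl S2 t" "z = proj0 \<rho>"
    using z by blast
  then have "\<rho> \<in> seqs S2" "infinite {i. proj1 \<rho> i = Atom 1}"
    using C by (auto simp: seqs_Pinf_def Pinf_def)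
  then obtain k where k: "length t \<le> k" "proj1 \<rho> k = Atom 1"
    unfolding infinite_nat_iff_unbounded_le by blast
  define t' where "t' = map \<rho> [0..<Suc k]"
  have "t' = t @ map \<rho> [length t..<Suc k]"
    unfolding t'_def using \<rho>(2) k(1) by (intro map_upt_eq_append_if_mem_cyl) auto
  moreover have "lsnd (t' ! k) = Atom 1"
    using k(2) by (simp add: t'_def proj1_def del: upt_Suc)
  moreover have "\<rho> \<in> cyl S2 t'"
    unfolding t'_def using \<open>\<rho> \<in> seqs S2\<close> by (rule mem_cyl_map_upt)
  ultimately have "marked_extension C t z t'"
    unfolding marked_extension_def using k(1) \<rho> by (auto simp: t'_def)
  then show ?thesis
    unfolding next_word_def by (rule someI)
qed

text \<open>\<open>word n u x i\<close> is the word t(i,n) of the proof idea.\<close>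
primrec word :: "nat \<Rightarrow> (nat \<Rightarrow> (nat \<Rightarrow> letter) set) \<Rightarrow> (nat \<Rightarrow> nat \<Rightarrow> letter) \<Rightarrow> nat \<Rightarrow> letter list"
  where
    "word 0 u x = (\<lambda>i. [])"
  | "word (Suc n) u x = (\<lambda>i. if i \<le> n
       then next_word (witness (u i) (x i)) (word n u x i) (x (Suc n)) else [])"

definition response :: "nat \<Rightarrow> (nat \<Rightarrow> (nat \<Rightarrow> letter) set) \<Rightarrow> (nat \<Rightarrow> nat \<Rightarrow> letter) \<Rightarrow> (nat \<Rightarrow> letter) set"
  where "response n u x = (\<Inter>i\<le>n. proj0 ` (witness (u i) (x i) \<inter> cyl S2 (word n u x i)))"

definition strategy :: "((nat \<Rightarrow> letter) set \<times> (nat \<Rightarrow> letter)) list \<Rightarrow> (nat \<Rightarrow> letter) set"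
  where "strategy h = response (length h - 1) (\<lambda>i. fst (h ! i)) (\<lambda>i. snd (h ! i))"

lemma word_self [simp]: "word n u x n = []"
  by (cases n) simp_all

lemma word_cong: "(\<And>k. k \<le> n \<Longrightarrow> u k = u' k \<and> x k = x' k) \<Longrightarrow> word n u x = word n u' x'"
  by (induction n) auto

lemma resp_strategy: "resp strategy u x n = response n u x"
proof -
  let ?u = "\<lambda>i. fst (map (\<lambda>i. (u i, x i)) [0..<Suc n] ! i)"
  let ?x = "\<lambda>i. snd (map (\<lambda>i. (u i, x i)) [0..<Suc n] ! i)"
  have agree: "?u k = u k \<and> ?x k = x k" if "k \<le> n" for k
    using that by (simp del: upt_Suc)
  then have "word n ?u ?x = word n u x"
    by (rule word_cong)
  then show ?thesis
    using agree by (simp add: resp_def strategy_def response_def del: upt_Suc)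
qed

lemma is_witness_if_legal:
  assumes "p1_legal T s u x i"
  shows "is_witness (u i) (x i) (witness (u i) (x i))"
  using assms by (intro is_witness_witness) (simp_all add: p1_legal_def)

lemma legal_mem_response:
  "p1_legal T strategy u x (Suc n) \<Longrightarrow> x (Suc n) \<in> response n u x"
  using resp_strategy by (auto simp: p1_legal_def)

lemma marked_extension_word_Suc:
  assumes legal: "\<forall>k\<le>Suc n. p1_legal T strategy u x k" and "i \<le> n"
  shows "marked_extension (witness (u i) (x i)) (word n u x i) (x (Suc n)) (word (Suc n) u x i)"
proof -
  have "x (Suc n) \<in> proj0 ` (witness (u i) (x i) \<inter> cyl S2 (word n u x i))"
    using legal_mem_response legal \<open>i \<le> n\<close> by (auto simp: response_def)
  moreover have "is_witness (u i) (x i) (witness (u i) (x i))"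
    using legal \<open>i \<le> n\<close> by (intro is_witness_if_legal[of strategy]) simp
  then have "witness (u i) (x i) \<subseteq> seqs_Pinf S"
    by (rule witness_subset_seqs_Pinf)
  ultimately show ?thesis
    using \<open>i \<le> n\<close> by (simp add: marked_extension_next_word)
qed

lemma mem_proj0_witness_word:
  assumes legal: "\<forall>k\<le>n. p1_legal T strategy u x k" and "i \<le> n"
  shows "x n \<in> proj0 ` (witness (u i) (x i) \<inter> cyl S2 (word n u x i))"
proof (cases "i = n")
  case True
  have "is_witness (u n) (x n) (witness (u n) (x n))"
    using legal by (intro is_witness_if_legal[of strategy]) simp
  then have "x n \<in> proj0 ` witness (u n) (x n)" "witness (u n) (x n) \<subseteq> seqs S2"
    using witness_subset_seqs_Pinf by (auto simp: is_witness_def seqs_Pinf_def)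
  then show ?thesis
    using True by auto
next
  case False
  then obtain m where "n = Suc m" "i \<le> m"
    using \<open>i \<le> n\<close> by (cases n) auto
  then show ?thesis
    using marked_extension_word_Suc legal by (auto simp: marked_extension_def)
qed

lemma response_basic_nbhd:
  assumes legal: "\<forall>k\<le>n. p1_legal T strategy u x k"
  shows "response n u x \<in> B" "x n \<in> response n u x" "response n u x \<subseteq> u n"
proof -
  have mem: "proj0 ` (witness (u i) (x i) \<inter> cyl S2 (word n u x i)) \<in> B" if "i \<le> n" for i
  proof -
    have "is_witness (u i) (x i) (witness (u i) (x i))"
      using legal that by (intro is_witness_if_legal[of strategy]) simp
    moreover have "set (word n u x i) \<subseteq> S2"
      using mem_proj0_witness_word[OF legal that] set_subset_if_mem_cyl by blast
    ultimately show ?thesis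
      by (intro proj0_mem Int_mem2 cyl_mem2) (auto simp: is_witness_def)
  qed
  have "(\<Inter>i\<le>m. proj0 ` (witness (u i) (x i) \<inter> cyl S2 (word n u x i))) \<in> B" if "m \<le> n" for m
    using that
  proof (induction m)
    case (Suc m)
    then show ?case
      using mem Int_mem by (simp add: atMost_Suc)
  qed (use mem in simp)
  then show "response n u x \<in> B"
    by (simp add: response_def)
  show "x n \<in> response n u x"
    using mem_proj0_witness_word[OF legal] by (simp add: response_def)
  have "is_witness (u n) (x n) (witness (u n) (x n))"
    using legal by (intro is_witness_if_legal[of strategy]) simp
  then show "response n u x \<subseteq> u n"
    by (auto simp: response_def is_witness_def)
qed

context
  fixes u :: "nat \<Rightarrow> (nat \<Rightarrow> letter) set" and x :: "nat \<Rightarrow> nat \<Rightarrow> letter"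
  assumes legal: "\<forall>k. p1_legal T strategy u x k"
begin

lemma marked_extension_word:
  "i \<le> n \<Longrightarrow> marked_extension (witness (u i) (x i)) (word n u x i) (x (Suc n)) (word (Suc n) u x i)"
  by (rule marked_extension_word_Suc) (use legal in simp_all)

lemma word_prefix:
  assumes "i \<le> n" "n \<le> m"
  shows "\<exists>w. word m u x i = word n u x i @ w"
  using assms(2)
proof (induction m rule: dec_induct)
  case (step m)
  then obtain w where "word m u x i = word n u x i @ w"
    by blast
  moreover obtain w' where "word (Suc m) u x i = word m u x i @ w'"
    using marked_extension_word[of i m] assms(1) step.hyps(1)
    unfolding marked_extension_def by auto
  ultimately show ?case
    by auto
qed simp

lemma length_word:
  assumes "i \<le> n"
  shows "n - i \<le> length (word n u x i)"
  using assms
proof (induction n rule: dec_induct)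
  case (step n)
  have "length (word n u x i) < length (word (Suc n) u x i)"
    using marked_extension_word[OF step.hyps(1)] step.hyps(1) unfolding marked_extension_def by auto
  then show ?case
    using step.IH by linarith
qed simp

lemma mem_cyl_word:
  assumes "i \<le> n"
  obtains \<rho> where "\<rho> \<in> witness (u i) (x i)" "\<rho> \<in> cyl S2 (word n u x i)" "x n = proj0 \<rho>"
  using mem_proj0_witness_word[of n u x i] legal assms by blast

lemma set_word_subset:
  assumes "i \<le> n"
  shows "set (word n u x i) \<subseteq> S2"
proof -
  obtain \<rho> where "\<rho> \<in> cyl S2 (word n u x i)"
    using mem_cyl_word[OF assms] .
  then show ?thesis
    by (rule set_subset_if_mem_cyl)
qed

lemma lfst_word_nth:
  assumes "i \<le> n" "k < length (word n u x i)"
  shows "lfst (word n u x i ! k) = x n k"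
proof -
  obtain \<rho> where "\<rho> \<in> cyl S2 (word n u x i)" "x n = proj0 \<rho>"
    using mem_cyl_word assms(1) by blast
  then show ?thesis
    using assms(2) by (auto simp: cyl_def proj0_def)
qed

text \<open>The limit tau_i of the words t(i,n): its \<open>k\<close>-th letter is already present at round
  \<open>i + k + 1\<close>.\<close>
definition limit_word :: "nat \<Rightarrow> nat \<Rightarrow> letter"
  where "limit_word i k = word (i + Suc k) u x i ! k"

lemma length_word_limit: "k < length (word (i + Suc k) u x i)"
  using length_word[of i "i + Suc k"] by simp

lemma limit_word_eq_nth:
  assumes "i \<le> n" "k < length (word n u x i)"
  shows "limit_word i k = word n u x i ! k"
proof (cases "n \<le> i + Suc k")
  case True
  then obtain w where "word (i + Suc k) u x i = word n u x i @ w"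
    using word_prefix assms(1) by blast
  then show ?thesis
    using assms(2) by (simp add: limit_word_def nth_append)
next
  case False
  then obtain w where "word n u x i = word (i + Suc k) u x i @ w"
    using word_prefix[of i "i + Suc k" n] by auto
  then show ?thesis
    using length_word_limit by (simp add: limit_word_def nth_append)
qed

lemma limit_word_mem_seqs: "limit_word i \<in> seqs S2"
proof -
  have "limit_word i k \<in> S2" for k
    using set_word_subset[OF le_add1[of i "Suc k"]] nth_mem[OF length_word_limit[of k i]]
    unfolding limit_word_def by blast
  then show ?thesis
    by (simp add: seqs_def)
qed

lemma limit_word_mem_cyl: "i \<le> n \<Longrightarrow> limit_word i \<in> cyl S2 (word n u x i)"
  using limit_word_mem_seqs limit_word_eq_nth by (simp add: cyl_def)

lemma limit_word_mem_seqs_Pinf: "limit_word i \<in> seqs_Pinf S"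
proof -
  have "\<exists>k\<ge>N. proj1 (limit_word i) k = Atom 1" for N
  proof -
    obtain k where k: "length (word (i + N) u x i) \<le> k" "k < length (word (Suc (i + N)) u x i)"
        "lsnd (word (Suc (i + N)) u x i ! k) = Atom 1"
      using marked_extension_word[of i "i + N"] by (auto simp: marked_extension_def)
    moreover have "N \<le> k"
      using length_word[of i "i + N"] k(1) by simp
    ultimately show ?thesis
      using limit_word_eq_nth[of i "Suc (i + N)" k] by (auto simp: proj1_def)
  qed
  then have "infinite {k. proj1 (limit_word i) k = Atom 1}"
    by (simp add: infinite_nat_iff_unbounded_le)
  then show ?thesis
    using proj1_mem_seqs_prodA[OF limit_word_mem_seqs] limit_word_mem_seqs
    by (simp add: seqs_Pinf_def Pinf_def)
qed

lemma limit_word_mem_witness: "limit_word i \<in> witness (u i) (x i)"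
proof -
  have "is_witness (u i) (x i) (witness (u i) (x i))"
    using legal by (intro is_witness_if_legal[of strategy]) simp
  then obtain F where F: "closedin (cantor_top S2) F" "witness (u i) (x i) = F \<inter> seqs_Pinf S"
    unfolding is_witness_def by blast
  have "limit_word i \<in> F"
  proof (rule cantor_closed_contains_limit[OF F(1) limit_word_mem_seqs])
    fix N
    obtain \<rho> where \<rho>: "\<rho> \<in> witness (u i) (x i)" "\<rho> \<in> cyl S2 (word (i + N) u x i)"
      using mem_cyl_word[OF le_add1] by metis
    have "\<rho> j = limit_word i j" if "j < N" for j
    proof -
      have "j < length (word (i + N) u x i)"
        using length_word[OF le_add1, of i N] that by simp
      then show ?thesis
        using \<rho>(2) limit_word_eq_nth[OF le_add1] by (simp add: cyl_def)
    qed
    then show "\<exists>\<rho>\<in>F. \<forall>j<N. \<rho> j = limit_word i j"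
      using \<rho>(1) F(2) by blast
  qed
  then show ?thesis
    using F(2) limit_word_mem_seqs_Pinf by blast
qed

lemma proj0_limit_word: "proj0 (limit_word i) = proj0 (limit_word 0)"
proof
  fix k
  let ?n = "i + Suc k"
  have k: "k < length (word ?n u x 0)"
    using length_word[of 0 ?n] by simp
  have "lfst (limit_word i k) = x ?n k"
    unfolding limit_word_def by (rule lfst_word_nth[OF le_add1 length_word_limit])
  also have "\<dots> = lfst (word ?n u x 0 ! k)"
    by (rule lfst_word_nth[OF le0 k, symmetric])
  also have "\<dots> = lfst (limit_word 0 k)"
    by (simp only: limit_word_eq_nth[OF le0 k])
  finally show "proj0 (limit_word i) k = proj0 (limit_word 0) k"
    by (simp add: proj0_def)
qed

lemma proj0_limit_word_mem_response: "proj0 (limit_word 0) \<in> response n u x"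
proof -
  have "proj0 (limit_word 0) \<in> proj0 ` (witness (u i) (x i) \<inter> cyl S2 (word n u x i))"
    if "i \<le> n" for i
  proof
    show "proj0 (limit_word 0) = proj0 (limit_word i)"
      by (rule proj0_limit_word[symmetric])
    show "limit_word i \<in> witness (u i) (x i) \<inter> cyl S2 (word n u x i)"
      using limit_word_mem_witness limit_word_mem_cyl[OF that] by blast
  qed
  then show ?thesis
    by (simp add: response_def)
qed

end

lemma strong_choquet_T: "strong_choquet T"
proof -
  obtain c where "c \<in> S"
    using nonempty by blast
  then have "topspace T \<noteq> {}"
    using topspace by (auto simp: seqs_def)
  moreover have "openin T (resp strategy u x n) \<and> x n \<in> resp strategy u x n \<and> resp strategy u x n \<subseteq> u n"
    if "\<forall>k\<le>n. p1_legal T strategy u x k" for u x n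
    using response_basic_nbhd[OF that] basis by (auto simp: resp_strategy is_basis_def)
  moreover have "(\<Inter>n. resp strategy u x n) \<noteq> {}" if "\<forall>k. p1_legal T strategy u x k" for u x
    using proj0_limit_word_mem_response[OF that] by (auto simp: resp_strategy)
  ultimately show ?thesis
    unfolding strong_choquet_def by blast
qed

end

theorem theorem3p1:
  fixes T :: "letter set \<Rightarrow> (nat \<Rightarrow> letter) topology"
    and B :: "letter set \<Rightarrow> (nat \<Rightarrow> letter) set set"
  assumes top: "\<And>S. alphabet S \<Longrightarrow> topspace (T S) = seqs S"
    and basis: "\<And>S. alphabet S \<Longrightarrow> is_basis (T S) (B S)"
    and P1: "\<And>S w. alphabet S \<Longrightarrow> set w \<subseteq> S \<Longrightarrow> cyl S w \<in> B S"
    and P2: "\<And>S L1 L2. alphabet S \<Longrightarrow> L1 \<in> B S \<Longrightarrow> L2 \<in> B S \<Longrightarrow>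
               L1 \<union> L2 \<in> B S \<and> L1 \<inter> L2 \<in> B S"
    and P3: "\<And>S G L. alphabet S \<Longrightarrow> alphabet G \<Longrightarrow> L \<in> B (prodA S G) \<Longrightarrow>
               proj0 ` L \<in> B S"
    and P4: "\<And>S L. alphabet S \<Longrightarrow> L \<in> B S \<Longrightarrow>
               \<exists>C \<in> B (prodA S two). C \<subseteq> seqs_Pinf S \<and>
                 (\<exists>F. closedin (cantor_top (prodA S two)) F \<and> C = F \<inter> seqs_Pinf S) \<and>
                 L = proj0 ` C"
  shows "\<forall>S. alphabet S \<longrightarrow> strong_choquet (T S)"
proof (intro allI impI)
  fix S
  assume S: "alphabet S"
  then have S2: "alphabet (prodA S two)"
    using alphabet_prodA alphabet_two by blast
  have "S \<noteq> {}"
    using S by (auto simp: alphabet_def)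
  then interpret choquet_basis "T S" "B S" "B (prodA S two)" S
    by unfold_locales (simp_all add: S S2 top basis P1 P2 P3[OF S alphabet_two] P4)
  show "strong_choquet (T S)"
    by (rule strong_choquet_T)
qed

end
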